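(* Consider the finite difference scheme below with the FIR operators $\mathbb{D}_t^{\alpha}$ and $\mathbb{D}_t^{\alpha/2}$, and let $\{u_i^k: 0\le i\le N_S,\ 0\le k\le N_T\}$ be a solution of it for given data $f_i^k$ and initial values $u_i^0$. Then for every $1\le n\le N_T$, $$\Delta t\sum_{k=1}^n\|u^k\|_\infty^2\le\frac{2(1+\sqrt{1+L^2\mu})}{L\mu}\Big(\rho\|u^0\|^2+\varrho[(u_0^0)^2+(u_{N_S}^0)^2]+\frac{\Delta t}{8\nu}\sum_{k=1}^n[(hf_0^k)^2+(hf_{N_S}^k)^2]+\frac{\Delta t}{\mu}\sum_{k=1}^nh\sum_{i=1}^{N_S-1}(f_i^k)^2\Big),$$ where $\rho=\frac{t_n^{1-\alpha}-\alpha(1-\alpha)\varepsilon t_{n-1}\Delta t}{\Gamma(2-\alpha)}$, $\mu=\frac{t_n^{-\alpha}-2\alpha\varepsilon t_{n-1}}{\Gamma(1-\alpha)}$, $\varrho=\frac{t_n^{1-\alpha/2}-\frac\alpha2(1-\frac\alpha2)\varepsilon t_{n-1}\Delta t}{\Gamma(2-\frac\alpha2)}$, $\nu=\frac{t_n^{-\alpha/2}-\alpha\varepsilon t_{n-1}}{\Gamma(1-\frac\alpha2)}$.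
   Context: Let $0<\alpha<1$, $x_l<x_r$, $L=x_r-x_l$, $T>0$, $N_T,N_S$ positive integers, $\Delta t=T/N_T$, $t_k=k\Delta t$, $h=(x_r-x_l)/N_S$, $x_i=x_l+ih$. For a grid vector $v=(v_0,\dots,v_{N_S})$: $\delta_xv_{i+1/2}=(v_{i+1}-v_i)/h$, $\delta_x^2v_i=(\delta_xv_{i+1/2}-\delta_xv_{i-1/2})/h$; $(v,w)=h\big[\tfrac12v_0w_0+\sum_{i=1}^{N_S-1}v_iw_i+\tfrac12v_{N_S}w_{N_S}\big]$, $\|v\|^2=(v,v)$, $\|\delta_xv\|^2=h\sum_{i=1}^{N_S}(\delta_xv_{i-1/2})^2$, $\|v\|_\infty=\max_i|v_i|$. For $\beta\in\{\alpha,\alpha/2\}$ let $s_j^{(\beta)}>0,\omega_j^{(\beta)}>0$ ($j=1,\dots,N_{\exp}$) satisfy $|t^{-1-\beta}-\sum_j\omega_j^{(\beta)}e^{-s_j^{(\beta)}t}|\le\varepsilon$ for all $t\in[\Delta t,T]$. The FIR operator acts on a time sequence $(g^k)_{k\ge0}$ by $$\mathbb{D}_t^\beta g^n=\frac{g^n-g^{n-1}}{\Delta t^\beta\Gamma(2-\beta)}+\frac{1}{\Gamma(1-\beta)}\Big[\frac{g^{n-1}}{\Delta t^\beta}-\frac{g^0}{t_n^\beta}-\beta\sum_{j}\omega_j^{(\beta)}U_j^n\Big],$$ with $U_j^1=0$ and for $n\ge2$, writing $s=s_j^{(\beta)}$, $U_j^n=e^{-s\Delta t}U_j^{n-1}+\frac{e^{-s\Delta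 t}}{s^2\Delta t}[(e^{-s\Delta t}-1+s\Delta t)g^{n-1}+(1-e^{-s\Delta t}-e^{-s\Delta t}s\Delta t)g^{n-2}]$; it is applied at each fixed spatial index $i$ to $k\mapsto u_i^k$. The scheme is: $\mathbb{D}_t^\alpha u_i^n=\delta_x^2u_i^n+f_i^n$ for $1\le i\le N_S-1$, $1\le n\le N_T$; $\mathbb{D}_t^\alpha u_0^n=\frac2h[\delta_xu_{1/2}^n-\mathbb{D}_t^{\alpha/2}u_0^n]+f_0^n$; $\mathbb{D}_t^\alpha u_{N_S}^n=\frac2h[-\delta_xu_{N_S-1/2}^n-\mathbb{D}_t^{\alpha/2}u_{N_S}^n]+f_{N_S}^n$ for $1\le n\le N_T$. *)

theory Defs
  imports "HOL-Analysis.Analysis"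
begin

text \<open>History variables U_j^n of the FIR operator for one exponential node s,
  step dt, acting on the time sequence g (g k = g^k).  U^1 = 0; U^0 is unused.\<close>
fun FIR_U :: "real \<Rightarrow> real \<Rightarrow> (nat \<Rightarrow> real) \<Rightarrow> nat \<Rightarrow> real" where
  "FIR_U dt s g 0 = 0"
| "FIR_U dt s g (Suc 0) = 0"
| "FIR_U dt s g (Suc (Suc m)) =
     exp (- s * dt) * FIR_U dt s g (Suc m)
   + exp (- s * dt) / (s^2 * dt) *
       ((exp (- s * dt) - 1 + s * dt) * g (Suc m)
        + (1 - exp (- s * dt) - exp (- s * dt) * s * dt) * g m)"

definition FIR :: "real \<Rightarrow> real \<Rightarrow> nat \<Rightarrow> (nat \<Rightarrow> real) \<Rightarrow> (nat \<Rightarrow> real)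
                    \<Rightarrow> (nat \<Rightarrow> real) \<Rightarrow> nat \<Rightarrow> real" where
  "FIR dt \<beta> Nexp w s g n =
     (g n - g (n - 1)) / (dt powr \<beta> * Gamma (2 - \<beta>))
   + 1 / Gamma (1 - \<beta>) *
       (g (n - 1) / dt powr \<beta> - g 0 / (real n * dt) powr \<beta>
        - \<beta> * (\<Sum>j = 1..Nexp. w j * FIR_U dt (s j) g n))"

definition SOE_approx :: "real \<Rightarrow> real \<Rightarrow> real \<Rightarrow> real \<Rightarrow> nat \<Rightarrow> (nat \<Rightarrow> real)
                         \<Rightarrow> (nat \<Rightarrow> real) \<Rightarrow> bool" where
  "SOE_approx \<beta> dt T \<epsilon> Nexp w s \<longleftrightarrow>
     (\<forall>j\<in>{1..Nexp}. s j > 0 \<and> w j > 0) \<and>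
     (\<forall>t\<in>{dt..T}. \<bar>t powr (-1 - \<beta>) - (\<Sum>j = 1..Nexp. w j * exp (- s j * t))\<bar> \<le> \<epsilon>)"

text \<open>delta_x v_{i+1/2} = (v_{i+1} - v_i)/h\<close>
definition dx :: "real \<Rightarrow> (nat \<Rightarrow> real) \<Rightarrow> nat \<Rightarrow> real" where
  "dx h v i = (v (Suc i) - v i) / h"

text \<open>delta_x^2 v_i, for i \<ge> 1\<close>
definition dxx :: "real \<Rightarrow> (nat \<Rightarrow> real) \<Rightarrow> nat \<Rightarrow> real" where
  "dxx h v i = (dx h v i - dx h v (i - 1)) / h"

definition gnorm2 :: "real \<Rightarrow> nat \<Rightarrow> (nat \<Rightarrow> real) \<Rightarrow> real" where
  "gnorm2 h NS v = h * ((v 0)^2 / 2 + (\<Sum>i = 1..NS - 1. (v i)^2) + (v NS)^2 / 2)"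

definition gnorm_inf :: "nat \<Rightarrow> (nat \<Rightarrow> real) \<Rightarrow> real" where
  "gnorm_inf NS v = Max ((\<lambda>i. \<bar>v i\<bar>) ` {0..NS})"

end

theory Submission
  imports Defs
begin

text \<open>
  The recursion defining \<open>FIR_U\<close> evaluates exactly the history integral of each exponential
  \<open>e\<^sup>-\<^sup>s\<^sup>(\<^sup>t\<^sub>n\<^sup>-\<^sup>x\<^sup>)\<close> against the piecewise linear interpolant of the time sequence, and the
  L1 formula does the same for the exact kernel \<open>(t\<^sub>n - x)\<^sup>-\<^sup>1\<^sup>-\<^sup>\<beta>\<close>. Hence the FIR operator is
  the L1 operator plus a quadrature error that the sum-of-exponentials accuracy \<open>\<epsilon>\<close> bounds by the
  interpolant. The L1 operator has nonnegative nonincreasing weights, so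
  \<open>2 g\<^sub>k (L1 g)\<^sub>k \<ge> (L1 g\<^sup>2)\<^sub>k\<close>; summing in time gives a coercivity estimate for the FIR
  operator with the constants \<open>\<mu>, \<rho>\<close> (order \<open>\<alpha>\<close>) and \<open>\<nu>, \<rho>\<^sub>h\<close> (order \<open>\<alpha>/2\<close>).

  Testing the scheme with \<open>u\<^sup>k\<close> in the trapezoidal inner product, summation by parts turns
  the boundary rows into the boundary FIR terms, and Young's inequality bounds
  \<open>\<mu>/4 \<Sum> \<parallel>u\<^sup>k\<parallel>\<^sup>2 + \<Sum> \<parallel>\<delta>\<^sub>x u\<^sup>k\<parallel>\<^sup>2\<close> by the data. The discrete Sobolev inequality
  \<open>\<parallel>v\<parallel>\<^sub>\<infinity>\<^sup>2 \<le> (1/L + 1/\<eta>) \<parallel>v\<parallel>\<^sup>2 + \<eta> \<parallel>\<delta>\<^sub>x v\<parallel>\<^sup>2\<close>, with \<open>\<eta>\<close> chosen so that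
  \<open>1/L + 1/\<eta> = \<eta> \<mu> / 4\<close>, converts this into the maximum-norm bound.
\<close>

section \<open>The L1 formula\<close>

lemma powr_increment_mvt:
  fixes j g :: real
  assumes "0 < j"
  obtains z where "j < z" "z < j + 1" "(j + 1) powr g - j powr g = g * z powr (g - 1)"
proof -
  have "\<exists>z. j < z \<and> z < j + 1 \<and> (j + 1) powr g - j powr g = ((j + 1) - j) * (g * z powr (g - 1))"
    by (rule MVT2) (use assms in \<open>auto intro!: has_real_derivative_powr\<close>)
  then show ?thesis using that by auto
qed

lemma powr_increment_ge:
  fixes j g :: real
  assumes "0 \<le> j" "0 < g" "g < 1"
  shows "g * (j + 1) powr (g - 1) \<le> (j + 1) powr g - j powr g"
proof (cases "j = 0")
  case True
  then show ?thesis using assms by simp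
next
  case False
  with assms have "j > 0" by simp
  then obtain z where z: "j < z" "z < j + 1" "(j + 1) powr g - j powr g = g * z powr (g - 1)"
    by (rule powr_increment_mvt)
  have "(j + 1) powr (g - 1) \<le> z powr (g - 1)"
    using z \<open>j > 0\<close> assms by (intro powr_mono2') auto
  then show ?thesis using z assms by (simp add: mult_left_mono)
qed

lemma powr_increment_le:
  fixes j g :: real
  assumes "0 < j" "0 < g" "g < 1"
  shows "(j + 1) powr g - j powr g \<le> g * j powr (g - 1)"
proof -
  obtain z where z: "j < z" "z < j + 1" "(j + 1) powr g - j powr g = g * z powr (g - 1)"
    using assms(1) by (rule powr_increment_mvt)
  have "z powr (g - 1) \<le> j powr (g - 1)"
    using z assms by (intro powr_mono2') auto
  then show ?thesis using z assms by (simp add: mult_left_mono)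
qed

lemma powr_increment_antimono:
  fixes j g :: real
  assumes "0 \<le> j" "0 < g" "g < 1"
  shows "(j + 2) powr g - (j + 1) powr g \<le> (j + 1) powr g - j powr g"
  using powr_increment_ge[OF assms] powr_increment_le[of "j + 1" g] assms
  by (simp add: add.assoc)

definition L1_conv :: "(nat \<Rightarrow> real) \<Rightarrow> (nat \<Rightarrow> real) \<Rightarrow> nat \<Rightarrow> real" where
  "L1_conv a g k = (\<Sum>i<k. a (k - 1 - i) * (g (Suc i) - g i))"

lemma abel_sum_nondec_weights_nonneg:
  fixes b y :: "nat \<Rightarrow> real"
  assumes "\<And>i. i < m \<Longrightarrow> b i \<le> b (Suc i)" "b 0 \<ge> 0" "\<And>i. i \<le> Suc m \<Longrightarrow> y i \<ge> 0"
  shows "(\<Sum>i\<le>m. b i * (y i - y (Suc i))) + b m * y (Suc m) \<ge> 0"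
  using assms
proof (induction m)
  case 0
  then show ?case by (simp add: algebra_simps)
next
  case (Suc m)
  have "(\<Sum>i\<le>m. b i * (y i - y (Suc i))) + b m * y (Suc m) \<ge> 0"
    using Suc by auto
  moreover have "(b (Suc m) - b m) * y (Suc m) \<ge> 0"
    using Suc.prems by auto
  ultimately show ?case by (simp add: algebra_simps)
qed

text \<open>The difference of the two sides is an Abel sum of the squares \<open>(g\<^sub>k - g\<^sub>i)\<^sup>2\<close>
  against nondecreasing weights.\<close>

lemma L1_conv_sq_le:
  fixes a g :: "nat \<Rightarrow> real"
  assumes "\<And>j. a j \<ge> 0" and "\<And>j. a (Suc j) \<le> a j"
  shows "L1_conv a (\<lambda>i. (g i)^2) k \<le> 2 * g k * L1_conv a g k"
proof (cases k)
  case 0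
  then show ?thesis by (simp add: L1_conv_def)
next
  case (Suc m)
  define b where "b i = a (k - 1 - i)" for i
  define y where "y i = (g k - g i)^2" for i
  have "2 * g k * L1_conv a g k - L1_conv a (\<lambda>i. (g i)^2) k = (\<Sum>i\<le>m. b i * (y i - y (Suc i)))"
    unfolding L1_conv_def b_def y_def Suc lessThan_Suc_atMost[symmetric] sum_distrib_left
      sum_subtractf[symmetric]
    by (rule sum.cong) (auto simp: power2_eq_square algebra_simps)
  also have "\<dots> = (\<Sum>i\<le>m. b i * (y i - y (Suc i))) + b m * y (Suc m)"
    by (simp add: y_def Suc)
  also have "\<dots> \<ge> 0"
  proof (rule abel_sum_nondec_weights_nonneg)
    fix i assume "i < m"
    then have "k - 1 - i = Suc (k - 1 - Suc i)" using Suc by simp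
    then show "b i \<le> b (Suc i)" unfolding b_def using assms(2) by metis
  qed (auto simp: b_def assms(1) y_def)
  finally show ?thesis by simp
qed

lemma sum_L1_conv:
  fixes a G :: "nat \<Rightarrow> real"
  shows "(\<Sum>k=1..n. L1_conv a G k) = (\<Sum>i<n. a (n - 1 - i) * G (Suc i)) - (\<Sum>l<n. a l) * G 0"
proof (induction n)
  case 0
  then show ?case by simp
next
  case (Suc n)
  have "L1_conv a G (Suc n) = (\<Sum>i<Suc n. a (n - i) * G (Suc i)) - (\<Sum>i<Suc n. a (n - i) * G i)"
    unfolding L1_conv_def sum_subtractf[symmetric] by (simp add: algebra_simps)
  moreover have "(\<Sum>i<Suc n. a (n - i) * G i) = a n * G 0 + (\<Sum>i<n. a (n - 1 - i) * G (Suc i))"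
    by (subst sum.lessThan_Suc_shift) simp
  ultimately show ?case using Suc by (simp add: algebra_simps)
qed

lemma Gamma_two_minus:
  fixes b :: real
  assumes "b < 1"
  shows "Gamma (2 - b) = (1 - b) * Gamma (1 - b)"
proof -
  have "1 - b \<notin> \<int>\<^sub>\<le>\<^sub>0"
    using assms nonpos_Ints_nonpos by fastforce
  from Gamma_plus1[OF this] show ?thesis by (simp add: algebra_simps)
qed

definition L1_weight :: "real \<Rightarrow> real \<Rightarrow> nat \<Rightarrow> real" where
  "L1_weight dt b j = dt powr (-b) * ((real j + 1) powr (1 - b) - real j powr (1 - b)) / Gamma (2 - b)"

context
  fixes dt b :: real
  assumes dt: "dt > 0" and b: "0 < b" "b < 1"
begin

lemma L1_weight_nonneg: "L1_weight dt b j \<ge> 0"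
proof -
  have "real j powr (1 - b) \<le> (real j + 1) powr (1 - b)"
    using b by (intro powr_mono2) auto
  then show ?thesis unfolding L1_weight_def using b dt by (auto intro!: divide_nonneg_pos)
qed

lemma L1_weight_Suc_le: "L1_weight dt b (Suc j) \<le> L1_weight dt b j"
proof -
  have "(real j + 2) powr (1 - b) - (real j + 1) powr (1 - b)
      \<le> (real j + 1) powr (1 - b) - real j powr (1 - b)"
    using powr_increment_antimono[of "real j" "1 - b"] b by auto
  then show ?thesis unfolding L1_weight_def using b dt
    by (intro divide_right_mono mult_left_mono) (auto simp: add.commute add.left_commute)
qed

lemma L1_weight_0: "L1_weight dt b 0 = 1 / (dt powr b * Gamma (2 - b))"
  unfolding L1_weight_def using b by (simp add: powr_minus_divide)

lemma sum_L1_weight: "(\<Sum>l<n. L1_weight dt b l) = dt powr (-b) * real n powr (1 - b) / Gamma (2 - b)"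
proof -
  have "(\<Sum>l<n. L1_weight dt b l)
      = dt powr (-b) / Gamma (2 - b) * (\<Sum>l<n. (1 + real l) powr (1 - b) - real l powr (1 - b))"
    unfolding L1_weight_def sum_distrib_left by (rule sum.cong) (auto simp: add.commute)
  also have "(\<Sum>l<n. (1 + real l) powr (1 - b) - real l powr (1 - b)) = real n powr (1 - b)"
    using sum_lessThan_telescope[of "\<lambda>l. real l powr (1 - b)" n] by simp
  finally show ?thesis by simp
qed

lemma L1_weight_ge:
  assumes "j < n"
  shows "(real n * dt) powr (-b) / Gamma (1 - b) \<le> L1_weight dt b j"
proof -
  have "(1 - b) * real n powr (-b) \<le> (1 - b) * (real j + 1) powr (-b)"
    using assms b by (intro mult_left_mono powr_mono2') auto
  also have "\<dots> \<le> (real j + 1) powr (1 - b) - real j powr (1 - b)"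
    using powr_increment_ge[of "real j" "1 - b"] b by simp
  finally have "dt powr (-b) * ((1 - b) * real n powr (-b)) / Gamma (2 - b) \<le> L1_weight dt b j"
    unfolding L1_weight_def using b dt by (intro divide_right_mono mult_left_mono) auto
  moreover have "dt powr (-b) * ((1 - b) * real n powr (-b)) / Gamma (2 - b)
      = (real n * dt) powr (-b) / Gamma (1 - b)"
    using b Gamma_two_minus[of b] by (simp add: powr_mult)
  ultimately show ?thesis by simp
qed

end

section \<open>The FIR operator as a perturbed L1 formula\<close>

lemma exp_kernel_linear_has_integral:
  fixes p :: "real \<Rightarrow> real"
  assumes s: "s \<noteq> 0" and "x0 \<le> x1" and p: "\<And>x. (p has_real_derivative B) (at x)"
  shows "((\<lambda>x. exp (- s * (c - x)) * p x) has_integral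
           exp (- s * (c - x1)) * (p x1 / s - B / s^2) - exp (- s * (c - x0)) * (p x0 / s - B / s^2))
         {x0..x1}"
proof (rule fundamental_theorem_of_calculus[OF \<open>x0 \<le> x1\<close>])
  fix x
  have "((\<lambda>x. exp (- s * (c - x)) * (p x / s - B / s^2)) has_real_derivative
      exp (- s * (c - x)) * s * (p x / s - B / s^2) + exp (- s * (c - x)) * (B / s)) (at x)"
    using s by (auto intro!: derivative_eq_intros p)
  also have "exp (- s * (c - x)) * s * (p x / s - B / s^2) + exp (- s * (c - x)) * (B / s)
      = exp (- s * (c - x)) * p x"
    using s by (simp add: field_simps power2_eq_square)
  finally show "((\<lambda>x. exp (- s * (c - x)) * (p x / s - B / s^2)) has_vector_derivative
      exp (- s * (c - x)) * p x) (at x within {x0..x1})"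
    using has_real_derivative_iff_has_vector_derivative has_field_derivative_at_within by blast
qed

lemma powr_kernel_linear_has_integral:
  fixes p :: "real \<Rightarrow> real"
  assumes b: "0 < b" "b < 1" and "x0 \<le> x1" "x1 < c" and p: "\<And>x. (p has_real_derivative B) (at x)"
  shows "((\<lambda>x. (c - x) powr (-1 - b) * p x) has_integral
           ((c - x1) powr (-b) * p x1 - (c - x0) powr (-b) * p x0
            + B * ((c - x1) powr (1 - b) - (c - x0) powr (1 - b)) / (1 - b)) / b)
         {x0..x1}"
proof -
  define F where "F x = ((c - x) powr (-b) * p x + B * (c - x) powr (1 - b) / (1 - b)) / b" for x
  have "(F has_vector_derivative (c - x) powr (-1 - b) * p x) (at x within {x0..x1})"
    if "x \<in> {x0..x1}" for x
  proof -
    have pos: "c - x > 0" using that \<open>x1 < c\<close> by simp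
    have e: "- b - 1 = -1 - b" by simp
    have "(F has_real_derivative (b * (c - x) powr (-1 - b) * p x + (c - x) powr (-b) * B
        - B * (1 - b) * (c - x) powr (-b) / (1 - b)) / b) (at x)"
      unfolding F_def using pos b by (auto intro!: derivative_eq_intros p simp: e)
    then have "(F has_real_derivative (c - x) powr (-1 - b) * p x) (at x)"
      using b by simp
    then show ?thesis
      using has_real_derivative_iff_has_vector_derivative has_field_derivative_at_within by blast
  qed
  then have "((\<lambda>x. (c - x) powr (-1 - b) * p x) has_integral F x1 - F x0) {x0..x1}"
    by (rule fundamental_theorem_of_calculus[OF \<open>x0 \<le> x1\<close>])
  also have "F x1 - F x0 = ((c - x1) powr (-b) * p x1 - (c - x0) powr (-b) * p x0
      + B * ((c - x1) powr (1 - b) - (c - x0) powr (1 - b)) / (1 - b)) / b"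
    unfolding F_def by (simp add: diff_divide_distrib add_divide_distrib right_diff_distrib)
  finally show ?thesis .
qed

definition lin_interp :: "real \<Rightarrow> (nat \<Rightarrow> real) \<Rightarrow> nat \<Rightarrow> real \<Rightarrow> real" where
  "lin_interp dt g i x = g i * ((real i + 1) * dt - x) / dt + g (Suc i) * (x - real i * dt) / dt"

lemma lin_interp_has_derivative:
  "dt > 0 \<Longrightarrow> (lin_interp dt g i has_real_derivative (g (Suc i) - g i) / dt) (at x)"
  unfolding lin_interp_def by (auto intro!: derivative_eq_intros simp: field_simps)

lemma lin_interp_left [simp]: "dt > 0 \<Longrightarrow> lin_interp dt g i (real i * dt) = g i"
  and lin_interp_right [simp]: "dt > 0 \<Longrightarrow> lin_interp dt g i ((real i + 1) * dt) = g (Suc i)"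
  unfolding lin_interp_def by (simp_all add: field_simps)

lemma abs_lin_interp_le:
  assumes "dt > 0" "real i * dt \<le> x" "x \<le> (real i + 1) * dt"
  shows "\<bar>lin_interp dt g i x\<bar> \<le> lin_interp dt (\<lambda>j. \<bar>g j\<bar>) i x"
proof -
  have "\<bar>lin_interp dt g i x\<bar> \<le> \<bar>g i * ((real i + 1) * dt - x) / dt\<bar> + \<bar>g (Suc i) * (x - real i * dt) / dt\<bar>"
    unfolding lin_interp_def by (rule abs_triangle_ineq)
  also have "\<dots> = lin_interp dt (\<lambda>j. \<bar>g j\<bar>) i x"
    unfolding lin_interp_def using assms by (simp add: abs_mult)
  finally show ?thesis .
qed

lemma lin_interp_has_integral:
  assumes dt: "dt > 0"
  shows "(lin_interp dt g i has_integral dt * (g i + g (Suc i)) / 2) {real i * dt..(real i + 1) * dt}"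
proof -
  define F where "F x = (g (Suc i) * (x - real i * dt)^2 - g i * ((real i + 1) * dt - x)^2) / (2 * dt)" for x
  have "(lin_interp dt g i has_integral F ((real i + 1) * dt) - F (real i * dt)) {real i * dt..(real i + 1) * dt}"
  proof (rule fundamental_theorem_of_calculus)
    fix x
    have "(F has_real_derivative lin_interp dt g i x) (at x)"
      unfolding F_def lin_interp_def using dt
      by (auto intro!: derivative_eq_intros simp: field_simps power2_eq_square)
    then show "(F has_vector_derivative lin_interp dt g i x) (at x within {real i * dt..(real i + 1) * dt})"
      using has_real_derivative_iff_has_vector_derivative has_field_derivative_at_within by blast
  qed (use dt in simp)
  also have "F ((real i + 1) * dt) - F (real i * dt) = dt * (g i + g (Suc i)) / 2"
    unfolding F_def using dt by (simp add: field_simps power2_eq_square)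
  finally show ?thesis .
qed

definition exp_moment :: "real \<Rightarrow> real \<Rightarrow> nat \<Rightarrow> (nat \<Rightarrow> real) \<Rightarrow> nat \<Rightarrow> real" where
  "exp_moment dt s n g i =
     integral {real i * dt..(real i + 1) * dt} (\<lambda>x. exp (- s * (real n * dt - x)) * lin_interp dt g i x)"

definition kernel_moment :: "real \<Rightarrow> real \<Rightarrow> nat \<Rightarrow> (nat \<Rightarrow> real) \<Rightarrow> nat \<Rightarrow> real" where
  "kernel_moment dt b n g i =
     integral {real i * dt..(real i + 1) * dt} (\<lambda>x. (real n * dt - x) powr (-1 - b) * lin_interp dt g i x)"

lemma exp_moment_has_integral:
  assumes "dt > 0"
  shows "((\<lambda>x. exp (- s * (real n * dt - x)) * lin_interp dt g i x) has_integral exp_moment dt s n g i)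
           {real i * dt..(real i + 1) * dt}"
  unfolding exp_moment_def lin_interp_def using assms
  by (intro integrable_integral integrable_continuous_interval continuous_intros) auto

lemma exp_moment_Suc_Suc:
  assumes dt: "dt > 0" and s: "s > 0"
  shows "exp_moment dt s (Suc (Suc i)) g i = exp (- s * dt) / (s^2 * dt) *
       ((exp (- s * dt) - 1 + s * dt) * g (Suc i) + (1 - exp (- s * dt) - exp (- s * dt) * s * dt) * g i)"
proof -
  have e1: "exp (- s * (real (Suc (Suc i)) * dt - (real i + 1) * dt)) = exp (- s * dt)"
    by (simp add: algebra_simps)
  have e0: "exp (- s * (real (Suc (Suc i)) * dt - real i * dt)) = exp (- s * dt) * exp (- s * dt)"
    by (simp add: algebra_simps flip: exp_add)
  have "((\<lambda>x. exp (- s * (real (Suc (Suc i)) * dt - x)) * lin_interp dt g i x) has_integral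
      exp (- s * dt) * (g (Suc i) / s - (g (Suc i) - g i) / dt / s^2)
      - exp (- s * dt) * exp (- s * dt) * (g i / s - (g (Suc i) - g i) / dt / s^2))
      {real i * dt..(real i + 1) * dt}"
    using exp_kernel_linear_has_integral[OF _ _ lin_interp_has_derivative[OF dt],
        of s "real i * dt" "(real i + 1) * dt" "real (Suc (Suc i)) * dt" g i] dt s
    unfolding e0 e1 by simp
  then show ?thesis unfolding exp_moment_def using dt s
    by (simp add: integral_unique field_simps power2_eq_square)
qed

lemma exp_moment_Suc: "exp (- s * dt) * exp_moment dt s n g i = exp_moment dt s (Suc n) g i"
proof -
  have "exp_moment dt s (Suc n) g i = integral {real i * dt..(real i + 1) * dt}
      (\<lambda>x. exp (- s * dt) * (exp (- s * (real n * dt - x)) * lin_interp dt g i x))"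
    unfolding exp_moment_def by (rule integral_cong) (simp add: algebra_simps flip: exp_add)
  then show ?thesis unfolding exp_moment_def by simp
qed

lemma FIR_U_eq_sum_exp_moment:
  assumes "dt > 0" "s > 0"
  shows "FIR_U dt s g (Suc p) = (\<Sum>i<p. exp_moment dt s (Suc p) g i)"
proof (induction p)
  case 0
  then show ?case by simp
next
  case (Suc p)
  have "FIR_U dt s g (Suc (Suc p)) = exp (- s * dt) * FIR_U dt s g (Suc p) + exp_moment dt s (Suc (Suc p)) g p"
    using exp_moment_Suc_Suc[OF assms, of p g] by simp
  also have "\<dots> = (\<Sum>i<p. exp (- s * dt) * exp_moment dt s (Suc p) g i) + exp_moment dt s (Suc (Suc p)) g p"
    by (simp only: Suc sum_distrib_left)
  also have "\<dots> = (\<Sum>i<Suc p. exp_moment dt s (Suc (Suc p)) g i)"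
    by (simp only: exp_moment_Suc sum.lessThan_Suc)
  finally show ?case .
qed

lemma powr_kernel_lin_interp_has_integral:
  assumes dt: "dt > 0" and b: "0 < b" "b < 1" and i: "Suc i < n"
  shows "((\<lambda>x. (real n * dt - x) powr (-1 - b) * lin_interp dt g i x) has_integral
           ((real n * dt - (real i + 1) * dt) powr (-b) * lin_interp dt g i ((real i + 1) * dt)
            - (real n * dt - real i * dt) powr (-b) * lin_interp dt g i (real i * dt)
            + (g (Suc i) - g i) / dt * ((real n * dt - (real i + 1) * dt) powr (1 - b)
                                        - (real n * dt - real i * dt) powr (1 - b)) / (1 - b)) / b)
         {real i * dt..(real i + 1) * dt}"
  using i dt
  by (intro powr_kernel_linear_has_integral[OF b _ _ lin_interp_has_derivative[OF dt]]) auto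

lemma kernel_moment_has_integral:
  assumes "dt > 0" "0 < b" "b < 1" "Suc i < n"
  shows "((\<lambda>x. (real n * dt - x) powr (-1 - b) * lin_interp dt g i x) has_integral kernel_moment dt b n g i)
           {real i * dt..(real i + 1) * dt}"
  using powr_kernel_lin_interp_has_integral[OF assms] unfolding kernel_moment_def
  by (blast intro: integrable_integral has_integral_integrable)

lemma kernel_moment_eq:
  assumes dt: "dt > 0" and b: "0 < b" "b < 1" and i: "Suc i < n"
  shows "kernel_moment dt b n g i
    = ((real (n - Suc i) * dt) powr (-b) * g (Suc i) - (real (n - i) * dt) powr (-b) * g i
       - Gamma (1 - b) * L1_weight dt b (n - 1 - i) * (g (Suc i) - g i)) / b"
proof -
  define m where "m = n - 1 - i"
  have c1: "real n * dt - (real i + 1) * dt = real m * dt"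
    and c0: "real n * dt - real i * dt = (real m + 1) * dt"
    using i unfolding m_def by (auto simp: of_nat_diff algebra_simps)
  have L1_term: "(g (Suc i) - g i) / dt * ((real m * dt) powr (1 - b) - ((real m + 1) * dt) powr (1 - b)) / (1 - b)
      = - (Gamma (1 - b) * L1_weight dt b m * (g (Suc i) - g i))"
  proof -
    define D where "D = (real m + 1) powr (1 - b) - real m powr (1 - b)"
    have "dt powr (1 - b) = dt * dt powr (-b)"
      using dt by (simp add: powr_diff powr_minus_divide)
    then have P: "(real m * dt) powr (1 - b) - ((real m + 1) * dt) powr (1 - b) = - (dt * dt powr (-b) * D)"
      unfolding powr_mult D_def by (simp add: algebra_simps)
    have L: "L1_weight dt b m = dt powr (-b) * D / ((1 - b) * Gamma (1 - b))"
      unfolding L1_weight_def D_def Gamma_two_minus[OF b(2)] ..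
    have "Gamma (1 - b) \<noteq> 0" "1 - b \<noteq> 0"
      using b Gamma_real_pos[of "1 - b"] by linarith+
    then show ?thesis
      unfolding P L using dt by (simp add: field_simps)
  qed
  have "kernel_moment dt b n g i
    = ((real m * dt) powr (-b) * g (Suc i) - ((real m + 1) * dt) powr (-b) * g i
       - Gamma (1 - b) * L1_weight dt b m * (g (Suc i) - g i)) / b"
    using integral_unique[OF powr_kernel_lin_interp_has_integral[OF dt b i, of g]] dt
    unfolding kernel_moment_def c1 c0 L1_term by simp
  then show ?thesis
    using i unfolding m_def by (simp add: of_nat_diff)
qed

lemma SOE_moment_error:
  assumes dt: "dt > 0" and b: "0 < b" "b < 1" and i: "Suc i < n" and nT: "real n * dt \<le> T"
    and soe: "SOE_approx b dt T \<epsilon> Nexp w s"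
  shows "\<bar>kernel_moment dt b n g i - (\<Sum>j = 1..Nexp. w j * exp_moment dt (s j) n g i)\<bar>
    \<le> \<epsilon> * (dt * (\<bar>g i\<bar> + \<bar>g (Suc i)\<bar>) / 2)"
proof -
  define C where "C = {real i * dt..(real i + 1) * dt}"
  define err where "err x = (real n * dt - x) powr (-1 - b)
                   - (\<Sum>j = 1..Nexp. w j * exp (- s j * (real n * dt - x)))" for x
  have "((\<lambda>x. (real n * dt - x) powr (-1 - b) * lin_interp dt g i x
          - (\<Sum>j = 1..Nexp. w j * (exp (- s j * (real n * dt - x)) * lin_interp dt g i x)))
      has_integral kernel_moment dt b n g i - (\<Sum>j = 1..Nexp. w j * exp_moment dt (s j) n g i)) C"
    unfolding C_def
    by (intro has_integral_diff has_integral_sum has_integral_mult_right kernel_moment_has_integral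
        exp_moment_has_integral dt b i finite_atLeastAtMost)
  then have err_int: "((\<lambda>x. err x * lin_interp dt g i x)
      has_integral kernel_moment dt b n g i - (\<Sum>j = 1..Nexp. w j * exp_moment dt (s j) n g i)) C"
    unfolding err_def by (simp add: left_diff_distrib sum_distrib_right mult.assoc)
  have tent_int: "((\<lambda>x. \<epsilon> * lin_interp dt (\<lambda>j. \<bar>g j\<bar>) i x) has_integral \<epsilon> * (dt * (\<bar>g i\<bar> + \<bar>g (Suc i)\<bar>) / 2)) C"
    unfolding C_def by (intro has_integral_mult_right lin_interp_has_integral dt)
  have bound: "\<bar>err x * lin_interp dt g i x\<bar> \<le> \<epsilon> * lin_interp dt (\<lambda>j. \<bar>g j\<bar>) i x" if "x \<in> C" for x
  proof -
    have x: "real i * dt \<le> x" "x \<le> (real i + 1) * dt"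
      using that unfolding C_def by auto
    have "(real i + 2) * dt \<le> real n * dt"
      using i dt by (intro mult_right_mono) auto
    moreover have "0 \<le> x"
      using x(1) dt by (meson order_trans mult_nonneg_nonneg of_nat_0_le_iff less_imp_le)
    ultimately have "real n * dt - x \<in> {dt..T}"
      using x nT by (auto simp: algebra_simps)
    then have "\<bar>err x\<bar> \<le> \<epsilon>"
      using soe unfolding SOE_approx_def err_def by blast
    then show ?thesis
      unfolding abs_mult using abs_lin_interp_le[OF dt x] by (intro mult_mono) auto
  qed
  have "kernel_moment dt b n g i - (\<Sum>j = 1..Nexp. w j * exp_moment dt (s j) n g i)
      \<le> \<epsilon> * (dt * (\<bar>g i\<bar> + \<bar>g (Suc i)\<bar>) / 2)"
    by (rule has_integral_le[OF err_int tent_int]) (use bound in \<open>force simp: abs_le_iff\<close>)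
  moreover have "- (kernel_moment dt b n g i - (\<Sum>j = 1..Nexp. w j * exp_moment dt (s j) n g i))
      \<le> \<epsilon> * (dt * (\<bar>g i\<bar> + \<bar>g (Suc i)\<bar>) / 2)"
    by (rule has_integral_le[OF has_integral_neg[OF err_int] tent_int])
      (use bound in \<open>force simp: abs_le_iff\<close>)
  ultimately show ?thesis
    by linarith
qed

lemma FIR_eq_L1_conv_plus_SOE_error:
  assumes dt: "dt > 0" and b: "0 < b" "b < 1" and s: "\<And>j. j \<in> {1..Nexp} \<Longrightarrow> s j > 0"
  shows "FIR dt b Nexp w s g (Suc p) = L1_conv (L1_weight dt b) g (Suc p)
     + b / Gamma (1 - b) * (\<Sum>i<p. kernel_moment dt b (Suc p) g i
                                     - (\<Sum>j = 1..Nexp. w j * exp_moment dt (s j) (Suc p) g i))"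
proof -
  have Gamma_nz: "Gamma (1 - b) \<noteq> 0"
    using b Gamma_real_pos[of "1 - b"] by linarith
  define SL where "SL = (\<Sum>i<p. L1_weight dt b (p - i) * (g (Suc i) - g i))"
  define f where "f i = (real (Suc p - i) * dt) powr (-b) * g i" for i
  have "(\<Sum>j = 1..Nexp. w j * FIR_U dt (s j) g (Suc p))
      = (\<Sum>j = 1..Nexp. \<Sum>i<p. w j * exp_moment dt (s j) (Suc p) g i)"
    using FIR_U_eq_sum_exp_moment[OF dt] s by (auto simp: sum_distrib_left intro!: sum.cong)
  also have "\<dots> = (\<Sum>i<p. \<Sum>j = 1..Nexp. w j * exp_moment dt (s j) (Suc p) g i)"
    by (rule sum.swap)
  finally have history: "(\<Sum>j = 1..Nexp. w j * FIR_U dt (s j) g (Suc p))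
      = (\<Sum>i<p. \<Sum>j = 1..Nexp. w j * exp_moment dt (s j) (Suc p) g i)" .
  have "b * (\<Sum>i<p. kernel_moment dt b (Suc p) g i)
      = (\<Sum>i<p. (f (Suc i) - f i) - Gamma (1 - b) * (L1_weight dt b (p - i) * (g (Suc i) - g i)))"
    unfolding sum_distrib_left
    by (rule sum.cong) (use b in \<open>auto simp: kernel_moment_eq[OF dt b] f_def\<close>)
  also have "\<dots> = dt powr (-b) * g p - (real (Suc p) * dt) powr (-b) * g 0 - Gamma (1 - b) * SL"
    unfolding SL_def sum_subtractf[of "\<lambda>i. f (Suc i) - f i"] sum_lessThan_telescope sum_distrib_left
    by (simp add: f_def)
  finally have kernel: "b * (\<Sum>i<p. kernel_moment dt b (Suc p) g i)
      = dt powr (-b) * g p - (real (Suc p) * dt) powr (-b) * g 0 - Gamma (1 - b) * SL" .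
  have "L1_conv (L1_weight dt b) g (Suc p) = L1_weight dt b 0 * (g (Suc p) - g p) + SL"
    unfolding L1_conv_def SL_def by simp
  then show ?thesis
    unfolding FIR_def history sum_subtractf using kernel Gamma_nz L1_weight_0[OF dt b]
    by (simp add: field_simps powr_minus_divide)
qed

lemma FIR_L1_conv_error:
  assumes dt: "dt > 0" and b: "0 < b" "b < 1" and soe: "SOE_approx b dt T \<epsilon> Nexp w s"
    and n: "n \<ge> 1" "real n * dt \<le> T"
  shows "\<bar>FIR dt b Nexp w s g n - L1_conv (L1_weight dt b) g n\<bar>
    \<le> b * \<epsilon> / Gamma (1 - b) * (dt * (\<Sum>i<n - 1. (\<bar>g i\<bar> + \<bar>g (Suc i)\<bar>) / 2))"
proof -
  have s: "\<And>j. j \<in> {1..Nexp} \<Longrightarrow> s j > 0"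
    using soe unfolding SOE_approx_def by blast
  have "FIR dt b Nexp w s g n - L1_conv (L1_weight dt b) g n
      = b / Gamma (1 - b) * (\<Sum>i<n - 1. kernel_moment dt b n g i - (\<Sum>j = 1..Nexp. w j * exp_moment dt (s j) n g i))"
    using FIR_eq_L1_conv_plus_SOE_error[OF dt b s, where p = "n - 1"] n(1) by simp
  then have "\<bar>FIR dt b Nexp w s g n - L1_conv (L1_weight dt b) g n\<bar>
      = b / Gamma (1 - b) * \<bar>\<Sum>i<n - 1. kernel_moment dt b n g i - (\<Sum>j = 1..Nexp. w j * exp_moment dt (s j) n g i)\<bar>"
    using b by (simp add: abs_mult)
  also have "\<dots> \<le> b / Gamma (1 - b) * (\<Sum>i<n - 1. \<epsilon> * (dt * (\<bar>g i\<bar> + \<bar>g (Suc i)\<bar>) / 2))"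
    using b by (intro mult_left_mono order_trans[OF sum_abs sum_mono] SOE_moment_error[OF dt b _ n(2) soe]) auto
  also have "\<dots> = b * \<epsilon> / Gamma (1 - b) * (dt * (\<Sum>i<n - 1. (\<bar>g i\<bar> + \<bar>g (Suc i)\<bar>) / 2))"
    by (simp add: sum_distrib_left mult.assoc)
  finally show ?thesis .
qed

section \<open>Positivity of the FIR operator\<close>

lemma L1_conv_energy_ge:
  assumes dt: "dt > 0" and b: "0 < b" "b < 1"
  shows "(real n * dt) powr (-b) / Gamma (1 - b) / 2 * (dt * (\<Sum>k=1..n. (g k)^2))
           - (real n * dt) powr (1 - b) / Gamma (2 - b) / 2 * (g 0)^2
         \<le> dt * (\<Sum>k=1..n. g k * L1_conv (L1_weight dt b) g k)"
proof -
  define a where "a = L1_weight dt b"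
  define G where "G i = (g i)^2" for i
  have "(\<Sum>k=1..n. L1_conv a G k) \<le> (\<Sum>k=1..n. 2 * g k * L1_conv a g k)"
    unfolding G_def a_def by (intro sum_mono L1_conv_sq_le L1_weight_nonneg L1_weight_Suc_le dt b)
  then have "dt * (\<Sum>k=1..n. L1_conv a G k) \<le> dt * (\<Sum>k=1..n. 2 * g k * L1_conv a g k)"
    using dt by (intro mult_left_mono) auto
  then have L1_sq: "dt * (\<Sum>k=1..n. L1_conv a G k) \<le> 2 * (dt * (\<Sum>k=1..n. g k * L1_conv a g k))"
    by (simp add: sum_distrib_left algebra_simps)
  have "(real n * dt) powr (-b) / Gamma (1 - b) * (\<Sum>k=1..n. G k)
      = (\<Sum>i<n. (real n * dt) powr (-b) / Gamma (1 - b) * G (Suc i))"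
    by (simp add: sum_distrib_left sum.atLeast1_atMost_eq)
  also have "\<dots> \<le> (\<Sum>i<n. a (n - 1 - i) * G (Suc i))"
    unfolding a_def G_def by (intro sum_mono mult_right_mono L1_weight_ge dt b) auto
  finally have weights_ge: "(real n * dt) powr (-b) / Gamma (1 - b) * (\<Sum>k=1..n. G k)
      \<le> (\<Sum>i<n. a (n - 1 - i) * G (Suc i))" .
  have "dt * (\<Sum>l<n. a l) = (real n * dt) powr (1 - b) / Gamma (2 - b)"
    unfolding a_def sum_L1_weight[OF dt b] powr_mult using dt by (simp add: powr_diff powr_minus_divide ac_simps)
  moreover have "dt * (\<Sum>k=1..n. L1_conv a G k)
      = dt * (\<Sum>i<n. a (n - 1 - i) * G (Suc i)) - dt * (\<Sum>l<n. a l) * G 0"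
    unfolding sum_L1_conv by (simp add: right_diff_distrib mult.assoc)
  ultimately have "dt * (\<Sum>k=1..n. L1_conv a G k)
      = dt * (\<Sum>i<n. a (n - 1 - i) * G (Suc i)) - (real n * dt) powr (1 - b) / Gamma (2 - b) * G 0"
    by simp
  moreover have "dt * ((real n * dt) powr (-b) / Gamma (1 - b) * (\<Sum>k=1..n. G k))
      \<le> dt * (\<Sum>i<n. a (n - 1 - i) * G (Suc i))"
    using weights_ge dt by (intro mult_left_mono) auto
  ultimately show ?thesis
    using L1_sq unfolding a_def G_def by (simp add: algebra_simps)
qed

lemma abs_mult_mean_le:
  fixes x y z :: real
  shows "\<bar>x\<bar> * ((\<bar>y\<bar> + \<bar>z\<bar>) / 2) \<le> x^2 / 2 + (y^2 + z^2) / 4"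
proof -
  have "0 \<le> (\<bar>x\<bar> - \<bar>y\<bar>)^2 + (\<bar>x\<bar> - \<bar>z\<bar>)^2"
    by simp
  moreover have "(\<bar>x\<bar> - \<bar>y\<bar>)^2 + (\<bar>x\<bar> - \<bar>z\<bar>)^2
      = 2 * x^2 + y^2 + z^2 - 2 * (\<bar>x\<bar> * \<bar>y\<bar>) - 2 * (\<bar>x\<bar> * \<bar>z\<bar>)"
    by (simp add: power2_diff algebra_simps)
  moreover have "\<bar>x\<bar> * ((\<bar>y\<bar> + \<bar>z\<bar>) / 2) = \<bar>x\<bar> * \<bar>y\<bar> / 2 + \<bar>x\<bar> * \<bar>z\<bar> / 2"
    by (simp add: distrib_left add_divide_distrib)
  ultimately show ?thesis
    by argo
qed

lemma sum_adjacent_le: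
  fixes G :: "nat \<Rightarrow> real"
  assumes G: "\<And>i. G i \<ge> 0" and n: "n \<ge> 1"
  shows "(\<Sum>i<n - 1. G i + G (Suc i)) \<le> G 0 + 2 * (\<Sum>k=1..n. G k)"
proof -
  have shifted: "(\<Sum>i<n - 1. G (Suc i)) \<le> (\<Sum>k=1..n. G k)"
  proof -
    have "(\<Sum>i<n - 1. G (Suc i)) \<le> (\<Sum>i<n. G (Suc i))"
      using G by (intro sum_mono2) auto
    then show ?thesis
      by (simp add: sum.atLeast1_atMost_eq)
  qed
  have "(\<Sum>i<n - 1. G i) \<le> (\<Sum>i<n. G i)"
    using G by (intro sum_mono2) auto
  also have "\<dots> = G 0 + (\<Sum>i<n - 1. G (Suc i))"
  proof -
    obtain m where "n = Suc m"
      using n by (cases n) auto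
    then show ?thesis
      by (simp only: sum.lessThan_Suc_shift diff_Suc_1)
  qed
  finally show ?thesis
    using shifted unfolding sum.distrib by linarith
qed

lemma sum_abs_mult_history_le:
  fixes g :: "nat \<Rightarrow> real"
  assumes n: "n \<ge> 1"
  shows "(\<Sum>k=1..n. \<bar>g k\<bar> * (\<Sum>i<k - 1. (\<bar>g i\<bar> + \<bar>g (Suc i)\<bar>) / 2))
    \<le> (real n - 1) * ((\<Sum>k=1..n. (g k)^2) + (g 0)^2 / 4)"
proof -
  define G where "G i = (g i)^2" for i
  define A where "A = (\<Sum>k=1..n. G k)"
  define Z where "Z = (\<Sum>i<n - 1. G i + G (Suc i))"
  have G_nonneg: "G i \<ge> 0" for i
    unfolding G_def by simp
  have term_le: "\<bar>g k\<bar> * (\<Sum>i<k - 1. (\<bar>g i\<bar> + \<bar>g (Suc i)\<bar>) / 2) \<le> (real n - 1) * G k / 2 + Z / 4"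
    if k: "k \<in> {2..n}" for k
  proof -
    have "\<bar>g k\<bar> * (\<Sum>i<k - 1. (\<bar>g i\<bar> + \<bar>g (Suc i)\<bar>) / 2) \<le> (\<Sum>i<k - 1. G k / 2 + (G i + G (Suc i)) / 4)"
      unfolding sum_distrib_left G_def by (intro sum_mono abs_mult_mean_le)
    also have "\<dots> = real (k - 1) * G k / 2 + (\<Sum>i<k - 1. G i + G (Suc i)) / 4"
      by (simp add: sum.distrib sum_divide_distrib[symmetric])
    also have "\<dots> \<le> (real n - 1) * G k / 2 + Z / 4"
    proof (intro add_mono divide_right_mono mult_right_mono)
      show "(\<Sum>i<k - 1. G i + G (Suc i)) \<le> Z"
        unfolding Z_def using k G_nonneg by (intro sum_mono2) (auto intro: add_nonneg_nonneg)
    qed (use k G_nonneg in \<open>auto simp: of_nat_diff\<close>)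
    finally show ?thesis .
  qed
  have "(\<Sum>k=1..n. \<bar>g k\<bar> * (\<Sum>i<k - 1. (\<bar>g i\<bar> + \<bar>g (Suc i)\<bar>) / 2))
      = (\<Sum>k=2..n. \<bar>g k\<bar> * (\<Sum>i<k - 1. (\<bar>g i\<bar> + \<bar>g (Suc i)\<bar>) / 2))"
    using n by (simp add: sum.atLeast_Suc_atMost numeral_2_eq_2)
  also have "\<dots> \<le> (\<Sum>k=2..n. (real n - 1) * G k / 2 + Z / 4)"
    by (rule sum_mono) (rule term_le)
  also have "\<dots> = (real n - 1) / 2 * (\<Sum>k=2..n. G k) + (real n - 1) * Z / 4"
    using n by (simp add: sum.distrib sum_distrib_left of_nat_diff)
  also have "\<dots> \<le> (real n - 1) / 2 * A + (real n - 1) * (G 0 + 2 * A) / 4"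
  proof (intro add_mono mult_left_mono divide_right_mono)
    show "(\<Sum>k=2..n. G k) \<le> A"
      unfolding A_def using G_nonneg by (intro sum_mono2) auto
    show "Z \<le> G 0 + 2 * A"
      unfolding Z_def A_def by (rule sum_adjacent_le[OF G_nonneg n])
  qed (use n in auto)
  also have "\<dots> = (real n - 1) * ((\<Sum>k=1..n. (g k)^2) + (g 0)^2 / 4)"
    unfolding A_def G_def by (simp add: field_simps)
  finally show ?thesis .
qed

lemma SOE_approx_eps_nonneg:
  assumes "SOE_approx b dt T \<epsilon> Nexp w s" "dt \<le> T"
  shows "\<epsilon> \<ge> 0"
  using assms unfolding SOE_approx_def by force

lemma FIR_energy_ge_L1_conv_energy:
  assumes dt: "dt > 0" and b: "0 < b" "b < 1" and soe: "SOE_approx b dt T \<epsilon> Nexp w s"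
    and n: "n \<ge> 1" "real n * dt \<le> T"
  shows "dt * (\<Sum>k=1..n. g k * L1_conv (L1_weight dt b) g k)
           - b * \<epsilon> / Gamma (1 - b) * dt^2 * ((real n - 1) * ((\<Sum>k=1..n. (g k)^2) + (g 0)^2 / 4))
         \<le> dt * (\<Sum>k=1..n. g k * FIR dt b Nexp w s g k)"
proof -
  define H where "H k = (\<Sum>i<k - 1. (\<bar>g i\<bar> + \<bar>g (Suc i)\<bar>) / 2)" for k
  define c where "c = b * \<epsilon> / Gamma (1 - b)"
  have "dt \<le> real n * dt"
    using n dt by simp
  then have "c \<ge> 0"
    unfolding c_def using b SOE_approx_eps_nonneg[OF soe] n by simp
  have pointwise: "g k * L1_conv (L1_weight dt b) g k - c * dt * (\<bar>g k\<bar> * H k) \<le> g k * FIR dt b Nexp w s g k"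
    if k: "k \<in> {1..n}" for k
  proof -
    have "real k * dt \<le> T"
      using k n dt by (meson atLeastAtMost_iff mult_right_mono of_nat_le_iff order_trans less_imp_le)
    then have "\<bar>FIR dt b Nexp w s g k - L1_conv (L1_weight dt b) g k\<bar> \<le> c * (dt * H k)"
      using FIR_L1_conv_error[OF dt b soe] k unfolding c_def H_def by simp
    then have "\<bar>g k\<bar> * \<bar>FIR dt b Nexp w s g k - L1_conv (L1_weight dt b) g k\<bar> \<le> \<bar>g k\<bar> * (c * (dt * H k))"
      by (rule mult_left_mono) simp
    moreover have "- (\<bar>g k\<bar> * \<bar>FIR dt b Nexp w s g k - L1_conv (L1_weight dt b) g k\<bar>)
        \<le> g k * (FIR dt b Nexp w s g k - L1_conv (L1_weight dt b) g k)"
      using abs_ge_minus_self[of "g k * (FIR dt b Nexp w s g k - L1_conv (L1_weight dt b) g k)"]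
      unfolding abs_mult by linarith
    ultimately show ?thesis
      by (simp add: algebra_simps)
  qed
  have regroup: "dt * (\<Sum>k=1..n. x k) - c * dt^2 * (\<Sum>k=1..n. y k) = dt * (\<Sum>k=1..n. x k - c * dt * y k)"
    for x y :: "nat \<Rightarrow> real"
    by (simp add: sum_subtractf sum_distrib_left right_diff_distrib power2_eq_square mult_ac)
  have "c * dt^2 * ((real n - 1) * ((\<Sum>k=1..n. (g k)^2) + (g 0)^2 / 4)) \<ge> c * dt^2 * (\<Sum>k=1..n. \<bar>g k\<bar> * H k)"
    unfolding H_def using \<open>c \<ge> 0\<close> by (intro mult_left_mono sum_abs_mult_history_le n) auto
  moreover have "dt * (\<Sum>k=1..n. g k * L1_conv (L1_weight dt b) g k) - c * dt^2 * (\<Sum>k=1..n. \<bar>g k\<bar> * H k)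
      = dt * (\<Sum>k=1..n. g k * L1_conv (L1_weight dt b) g k - c * dt * (\<bar>g k\<bar> * H k))"
    by (rule regroup)
  moreover have "dt * (\<Sum>k=1..n. g k * L1_conv (L1_weight dt b) g k - c * dt * (\<bar>g k\<bar> * H k))
      \<le> dt * (\<Sum>k=1..n. g k * FIR dt b Nexp w s g k)"
    using dt pointwise by (intro mult_left_mono sum_mono) auto
  ultimately show ?thesis
    unfolding c_def[symmetric] by linarith
qed

text \<open>Half of the initial-value coefficient \<open>t\<^sub>n\<^sup>1\<^sup>-\<^sup>\<beta>/\<Gamma>(2-\<beta>)\<close> of the L1 energy absorbs the
  SOE error on \<open>g\<^sub>0\<close>; this is where \<open>\<rho>\<close> gets its correction term.\<close>

lemma powr_absorbs_SOE_correction: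
  assumes dt: "dt > 0" and b: "0 < b" "b < 1" and eps: "\<epsilon> \<ge> 0" and n: "n \<ge> 1"
    and mu: "(real n * dt) powr (-b) - 2 * b * \<epsilon> * ((real n - 1) * dt) > 0"
  shows "5 / 4 * b * (1 - b) * \<epsilon> * ((real n - 1) * dt) * dt \<le> (real n * dt) powr (1 - b) / 2"
proof -
  define tn where "tn = real n * dt"
  define tn1 where "tn1 = (real n - 1) * dt"
  have "tn > 0" and "tn1 \<ge> 0"
    unfolding tn_def tn1_def using n dt by simp_all
  have "tn * (2 * b * \<epsilon> * tn1) \<le> tn * tn powr (-b)"
    using mu \<open>tn > 0\<close> unfolding tn_def[symmetric] tn1_def[symmetric] by (intro mult_left_mono) auto
  also have "tn * tn powr (-b) = tn powr (1 - b)"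
    using powr_add[of tn 1 "-b"] \<open>tn > 0\<close> by simp
  finally have "tn * (2 * b * \<epsilon> * tn1) \<le> tn powr (1 - b)" .
  moreover have "5 / 4 * (1 - b) * dt * (b * \<epsilon> * tn1) \<le> tn * (b * \<epsilon> * tn1)"
  proof (cases "n = 1")
    case True
    then show ?thesis unfolding tn1_def by simp
  next
    case False
    with n have "2 \<le> real n"
      by simp
    then have "2 * dt \<le> tn"
      unfolding tn_def using dt by (intro mult_right_mono) auto
    moreover have "5 / 4 * (1 - b) * dt \<le> 2 * dt"
      using b dt by (intro mult_right_mono) auto
    ultimately show ?thesis
      using b eps \<open>tn1 \<ge> 0\<close> by (intro mult_right_mono) auto
  qed
  ultimately show ?thesis
    unfolding tn_def[symmetric] tn1_def[symmetric] by (simp add: algebra_simps)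
qed

lemma FIR_energy_ge:
  assumes dt: "dt > 0" and b: "0 < b" "b < 1" and soe: "SOE_approx b dt T \<epsilon> Nexp w s"
    and n: "n \<ge> 1" "real n * dt \<le> T"
    and mu: "(real n * dt) powr (-b) - 2 * b * \<epsilon> * ((real n - 1) * dt) > 0"
  shows "((real n * dt) powr (-b) - 2 * b * \<epsilon> * ((real n - 1) * dt)) / Gamma (1 - b) / 2
             * (dt * (\<Sum>k=1..n. (g k)^2))
           - ((real n * dt) powr (1 - b) - b * (1 - b) * \<epsilon> * ((real n - 1) * dt) * dt) / Gamma (2 - b)
             * (g 0)^2
         \<le> dt * (\<Sum>k=1..n. g k * FIR dt b Nexp w s g k)"
proof -
  define tn where "tn = real n * dt"
  define tn1 where "tn1 = (real n - 1) * dt"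
  define A where "A = (\<Sum>k=1..n. (g k)^2)"
  define c where "c = b * \<epsilon> / Gamma (1 - b)"
  have "dt \<le> real n * dt"
    using n dt by simp
  then have eps: "\<epsilon> \<ge> 0"
    using SOE_approx_eps_nonneg[OF soe] n by linarith
  have Gamma_nz: "Gamma (1 - b) \<noteq> 0" "1 - b \<noteq> 0"
    using b Gamma_real_pos[of "1 - b"] by linarith+
  have "tn powr (-b) / Gamma (1 - b) / 2 * (dt * A) - tn powr (1 - b) / Gamma (2 - b) / 2 * (g 0)^2
      \<le> dt * (\<Sum>k=1..n. g k * L1_conv (L1_weight dt b) g k)"
    unfolding tn_def A_def by (rule L1_conv_energy_ge[OF dt b])
  moreover have "dt * (\<Sum>k=1..n. g k * L1_conv (L1_weight dt b) g k) - c * dt^2 * ((real n - 1) * (A + (g 0)^2 / 4))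
      \<le> dt * (\<Sum>k=1..n. g k * FIR dt b Nexp w s g k)"
    unfolding c_def A_def by (rule FIR_energy_ge_L1_conv_energy[OF dt b soe n])
  moreover have "0 \<le> (tn powr (1 - b) / 2 - 5 / 4 * b * (1 - b) * \<epsilon> * tn1 * dt) / Gamma (2 - b) * (g 0)^2"
    using powr_absorbs_SOE_correction[OF dt b eps n(1) mu] b
    unfolding tn_def[symmetric] tn1_def[symmetric] by (intro mult_nonneg_nonneg divide_nonneg_pos) auto
  moreover have "tn powr (-b) / Gamma (1 - b) / 2 * (dt * A) - c * dt^2 * ((real n - 1) * A)
      = (tn powr (-b) - 2 * b * \<epsilon> * tn1) / Gamma (1 - b) / 2 * (dt * A)"
    unfolding c_def tn1_def using Gamma_nz by (simp add: field_simps power2_eq_square)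
  moreover have "- (tn powr (1 - b) / Gamma (2 - b) / 2 * (g 0)^2) - c * dt^2 * ((real n - 1) * ((g 0)^2 / 4))
      = - ((tn powr (1 - b) - b * (1 - b) * \<epsilon> * tn1 * dt) / Gamma (2 - b) * (g 0)^2)
        + (tn powr (1 - b) / 2 - 5 / 4 * b * (1 - b) * \<epsilon> * tn1 * dt) / Gamma (2 - b) * (g 0)^2"
    unfolding c_def tn1_def Gamma_two_minus[OF b(2)] using Gamma_nz
    by (simp add: divide_simps power2_eq_square) (simp add: algebra_simps)
  moreover have "c * dt^2 * ((real n - 1) * (A + (g 0)^2 / 4))
      = c * dt^2 * ((real n - 1) * A) + c * dt^2 * ((real n - 1) * ((g 0)^2 / 4))"
    by (simp add: algebra_simps)
  ultimately show ?thesis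
    unfolding tn_def[symmetric] tn1_def[symmetric] A_def[symmetric] by linarith
qed

section \<open>The discrete energy identity\<close>

definition trapezoid_sum :: "real \<Rightarrow> nat \<Rightarrow> (nat \<Rightarrow> real) \<Rightarrow> real" where
  "trapezoid_sum h N \<phi> = h * (\<phi> 0 / 2 + (\<Sum>i = 1..N - 1. \<phi> i) + \<phi> N / 2)"

lemma gnorm2_eq_trapezoid_sum: "gnorm2 h N v = trapezoid_sum h N (\<lambda>i. (v i)^2)"
  unfolding gnorm2_def trapezoid_sum_def ..

lemma trapezoid_sum_sum:
  "trapezoid_sum h N (\<lambda>i. \<Sum>k\<in>K. \<phi> k i) = (\<Sum>k\<in>K. trapezoid_sum h N (\<phi> k))"
proof -
  have "(\<Sum>k\<in>K. trapezoid_sum h N (\<phi> k))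
      = h * ((\<Sum>k\<in>K. \<phi> k 0) / 2 + (\<Sum>k\<in>K. \<Sum>i = 1..N - 1. \<phi> k i) + (\<Sum>k\<in>K. \<phi> k N) / 2)"
    unfolding trapezoid_sum_def by (simp add: sum_distrib_left[symmetric] sum.distrib sum_divide_distrib[symmetric])
  then show ?thesis
    unfolding trapezoid_sum_def by (simp add: sum.swap[of _ K])
qed

lemma trapezoid_sum_cmult: "trapezoid_sum h N (\<lambda>i. c * \<phi> i) = c * trapezoid_sum h N \<phi>"
  unfolding trapezoid_sum_def by (simp add: sum_distrib_left algebra_simps)

lemma trapezoid_sum_diff: "trapezoid_sum h N (\<lambda>i. \<phi> i - \<psi> i) = trapezoid_sum h N \<phi> - trapezoid_sum h N \<psi>"
  unfolding trapezoid_sum_def by (simp add: sum_subtractf diff_divide_distrib algebra_simps)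

lemma trapezoid_sum_add: "trapezoid_sum h N (\<lambda>i. \<phi> i + \<psi> i) = trapezoid_sum h N \<phi> + trapezoid_sum h N \<psi>"
  unfolding trapezoid_sum_def by (simp add: sum.distrib add_divide_distrib algebra_simps)

lemma trapezoid_sum_const: "N \<ge> 1 \<Longrightarrow> trapezoid_sum h N (\<lambda>_. c) = h * real N * c"
  unfolding trapezoid_sum_def by (simp add: of_nat_diff algebra_simps)

lemma trapezoid_sum_mono:
  assumes "h \<ge> 0" "\<And>i. i \<le> N \<Longrightarrow> \<phi> i \<le> \<psi> i"
  shows "trapezoid_sum h N \<phi> \<le> trapezoid_sum h N \<psi>"
  unfolding trapezoid_sum_def using assms
  by (intro mult_left_mono add_mono sum_mono divide_right_mono) auto

lemma summation_by_parts:
  fixes v d :: "nat \<Rightarrow> real"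
  shows "(\<Sum>i = 1..M. v i * (d i - d (i - 1))) + v 0 * d 0 - v (Suc M) * d M
     = - (\<Sum>m\<le>M. (v (Suc m) - v m) * d m)"
  by (induction M) (auto simp: algebra_simps)

lemma sum_dxx_by_parts:
  fixes v :: "nat \<Rightarrow> real"
  assumes h: "h > 0" and N: "N \<ge> 1"
  shows "(\<Sum>i = 1..N - 1. h * v i * dxx h v i) + v 0 * dx h v 0 - v N * dx h v (N - 1)
     = - (h * (\<Sum>m<N. (dx h v m)^2))"
proof -
  obtain M where M: "N = Suc M"
    using N by (cases N) auto
  have "(\<Sum>i = 1..N - 1. h * v i * dxx h v i) = (\<Sum>i = 1..M. v i * (dx h v i - dx h v (i - 1)))"
    unfolding M dxx_def using h by (intro sum.cong) auto
  moreover have "(\<Sum>m\<le>M. (v (Suc m) - v m) * dx h v m) = h * (\<Sum>m<N. (dx h v m)^2)"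
    unfolding M sum_distrib_left lessThan_Suc_atMost using h
    by (intro sum.cong) (auto simp: dx_def power2_eq_square)
  ultimately show ?thesis
    using summation_by_parts[of v "dx h v" M] unfolding M by simp
qed

text \<open>The boundary rows of the scheme are scaled by the weight \<open>h/2\<close> of the trapezoidal
  inner product, so summation by parts leaves only the boundary terms \<open>v\<^sub>0 b\<^sub>0 + v\<^sub>N b\<^sub>N\<close>.\<close>

lemma scheme_energy_identity:
  fixes v a f :: "nat \<Rightarrow> real"
  assumes h: "h > 0" and N: "N \<ge> 1"
    and interior: "\<And>i. 1 \<le> i \<Longrightarrow> i \<le> N - 1 \<Longrightarrow> a i = dxx h v i + f i"
    and left: "a 0 = 2 / h * (dx h v 0 - b\<^sub>0) + f 0"
    and right: "a N = 2 / h * (- dx h v (N - 1) - b\<^sub>N) + f N"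
  shows "trapezoid_sum h N (\<lambda>i. v i * a i) + (v 0 * b\<^sub>0 + v N * b\<^sub>N) + h * (\<Sum>m<N. (dx h v m)^2)
    = trapezoid_sum h N (\<lambda>i. v i * f i)"
proof -
  have "(\<Sum>i = 1..N - 1. v i * a i) = (\<Sum>i = 1..N - 1. v i * dxx h v i) + (\<Sum>i = 1..N - 1. v i * f i)"
    unfolding sum.distrib[symmetric] using interior by (intro sum.cong) (auto simp: algebra_simps)
  moreover have "h * (v 0 * a 0) / 2 = v 0 * dx h v 0 - v 0 * b\<^sub>0 + h * (v 0 * f 0) / 2"
    unfolding left using h by (simp add: field_simps)
  moreover have "h * (v N * a N) / 2 = - (v N * dx h v (N - 1)) - v N * b\<^sub>N + h * (v N * f N) / 2"
    unfolding right using h by (simp add: field_simps)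
  moreover have "h * (\<Sum>i = 1..N - 1. v i * dxx h v i) + v 0 * dx h v 0 - v N * dx h v (N - 1)
      = - (h * (\<Sum>m<N. (dx h v m)^2))"
    using sum_dxx_by_parts[OF h N, of v] by (simp add: sum_distrib_left mult.assoc)
  ultimately show ?thesis
    unfolding trapezoid_sum_def by (simp add: algebra_simps)
qed

lemma trapezoid_young:
  fixes v f :: "nat \<Rightarrow> real"
  assumes h: "h > 0" and \<mu>: "\<mu> > 0" and \<nu>: "\<nu> > 0"
  shows "trapezoid_sum h N (\<lambda>i. v i * f i)
    \<le> \<mu> / 4 * gnorm2 h N v + \<nu> / 2 * ((v 0)^2 + (v N)^2)
      + ((h * f 0)^2 + (h * f N)^2) / (8 * \<nu>) + h * (\<Sum>i = 1..N - 1. (f i)^2) / \<mu>"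
proof -
  have young: "x * y \<le> c / 4 * x^2 + y^2 / c" if "c > 0" for x y c :: real
  proof -
    have "0 \<le> (c * x - 2 * y)^2 / (4 * c)"
      using that by simp
    then show ?thesis
      using that by (simp add: field_simps power2_eq_square)
  qed
  have "h * (\<Sum>i = 1..N - 1. v i * f i) \<le> h * (\<Sum>i = 1..N - 1. \<mu> / 4 * (v i)^2 + (f i)^2 / \<mu>)"
    using h \<mu> by (intro mult_left_mono sum_mono young) auto
  also have "\<dots> = \<mu> / 4 * (h * (\<Sum>i = 1..N - 1. (v i)^2)) + h * (\<Sum>i = 1..N - 1. (f i)^2) / \<mu>"
    by (simp add: sum.distrib sum_distrib_left sum_divide_distrib algebra_simps)
  also have "h * (\<Sum>i = 1..N - 1. (v i)^2) \<le> gnorm2 h N v - h / 2 * ((v 0)^2 + (v N)^2)"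
    unfolding gnorm2_def by (simp add: algebra_simps)
  finally have "h * (\<Sum>i = 1..N - 1. v i * f i)
      \<le> \<mu> / 4 * (gnorm2 h N v - h / 2 * ((v 0)^2 + (v N)^2)) + h * (\<Sum>i = 1..N - 1. (f i)^2) / \<mu>"
    using \<mu> by simp
  moreover have "h / 2 * (v 0 * f 0) \<le> \<nu> / 2 * (v 0)^2 + (h * f 0)^2 / (8 * \<nu>)"
    and "h / 2 * (v N * f N) \<le> \<nu> / 2 * (v N)^2 + (h * f N)^2 / (8 * \<nu>)"
    using young[of "2 * \<nu>" "v 0" "h * f 0 / 2"] young[of "2 * \<nu>" "v N" "h * f N / 2"] \<nu>
    by (simp_all add: field_simps power2_eq_square)
  moreover have "0 \<le> \<mu> / 4 * (h / 2 * ((v 0)^2 + (v N)^2))"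
    using h \<mu> by simp
  ultimately show ?thesis
    unfolding trapezoid_sum_def by (simp add: algebra_simps add_divide_distrib)
qed

section \<open>A discrete Sobolev inequality\<close>

lemma diff_le_sum_abs_increments:
  fixes v :: "nat \<Rightarrow> real"
  assumes "i \<le> N" "j \<le> N"
  shows "v i - v j \<le> (\<Sum>m<N. \<bar>v (Suc m) - v m\<bar>)"
proof -
  have telescope: "v q - v p = (\<Sum>m = p..<q. v (Suc m) - v m)" if "p \<le> q" for p q
    using that by (induction q) (auto simp: atLeastLessThanSuc le_Suc_eq)
  have sub: "(\<Sum>m = p..<q. \<bar>v (Suc m) - v m\<bar>) \<le> (\<Sum>m<N. \<bar>v (Suc m) - v m\<bar>)" if "q \<le> N" for p q
    using that by (intro sum_mono2) auto
  show ?thesis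
  proof (cases "j \<le> i")
    case True
    have "v i - v j \<le> (\<Sum>m = j..<i. \<bar>v (Suc m) - v m\<bar>)"
      unfolding telescope[OF True] by (rule order_trans[OF abs_ge_self sum_abs])
    then show ?thesis using sub[of i j, OF assms(1)] by linarith
  next
    case False
    then have "v i - v j = - (\<Sum>m = i..<j. v (Suc m) - v m)"
      using telescope[of i j] by simp
    also have "\<dots> \<le> (\<Sum>m = i..<j. \<bar>v (Suc m) - v m\<bar>)"
      by (rule order_trans[OF abs_ge_minus_self sum_abs])
    finally show ?thesis using sub[of j i, OF assms(2)] by linarith
  qed
qed

lemma sum_sq_pairs_eq_gnorm2:
  assumes "N \<ge> 1"
  shows "h * (\<Sum>m<N. (v (Suc m))^2 + (v m)^2) = 2 * gnorm2 h N v"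
proof -
  obtain M where M: "N = Suc M"
    using assms by (cases N) auto
  have "(\<Sum>m<N. (v m)^2) = (v 0)^2 + (\<Sum>i = 1..N - 1. (v i)^2)"
    unfolding M by (simp add: sum.lessThan_Suc_shift sum.atLeast1_atMost_eq del: sum.lessThan_Suc)
  moreover have "(\<Sum>m<N. (v (Suc m))^2) = (\<Sum>i = 1..N - 1. (v i)^2) + (v N)^2"
    unfolding M by (simp add: sum.atLeast1_atMost_eq)
  ultimately show ?thesis
    unfolding gnorm2_def sum.distrib by (simp add: algebra_simps)
qed

lemma abs_sq_increment_le:
  fixes v :: "nat \<Rightarrow> real"
  assumes h: "h > 0" and \<eta>: "\<eta> > 0"
  shows "\<bar>(v (Suc q))^2 - (v q)^2\<bar> \<le> \<eta> * (h * (dx h v q)^2) + h * ((v (Suc q))^2 + (v q)^2) / (2 * \<eta>)"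
proof -
  have "(v (Suc q))^2 - (v q)^2 = h * dx h v q * (v (Suc q) + v q)"
    unfolding dx_def using h by (simp add: power2_eq_square field_simps)
  then have "\<bar>(v (Suc q))^2 - (v q)^2\<bar> = h * (\<bar>dx h v q\<bar> * \<bar>v (Suc q) + v q\<bar>)"
    using h by (simp add: abs_mult)
  also have "\<dots> \<le> h * (\<eta> * (dx h v q)^2 + (v (Suc q) + v q)^2 / (4 * \<eta>))"
  proof -
    have "0 \<le> (2 * \<eta> * \<bar>dx h v q\<bar> - \<bar>v (Suc q) + v q\<bar>)^2 / (4 * \<eta>)"
      using \<eta> by simp
    then show ?thesis
      using h \<eta> by (intro mult_left_mono) (auto simp: field_simps power2_eq_square)
  qed
  also have "\<dots> \<le> h * (\<eta> * (dx h v q)^2 + 2 * ((v (Suc q))^2 + (v q)^2) / (4 * \<eta>))"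
    using zero_le_power2[of "v (Suc q) - v q"] h \<eta>
    by (intro mult_left_mono add_left_mono divide_right_mono) (auto simp: power2_sum power2_diff)
  also have "\<dots> = \<eta> * (h * (dx h v q)^2) + h * ((v (Suc q))^2 + (v q)^2) / (2 * \<eta>)"
    using \<eta> by (simp add: field_simps)
  finally show ?thesis .
qed

lemma sum_abs_sq_increments_le:
  fixes v :: "nat \<Rightarrow> real"
  assumes h: "h > 0" and N: "N \<ge> 1" and \<eta>: "\<eta> > 0"
  shows "(\<Sum>q<N. \<bar>(v (Suc q))^2 - (v q)^2\<bar>) \<le> \<eta> * (h * (\<Sum>q<N. (dx h v q)^2)) + gnorm2 h N v / \<eta>"
proof -
  have "(\<Sum>q<N. \<bar>(v (Suc q))^2 - (v q)^2\<bar>)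
      \<le> (\<Sum>q<N. \<eta> * (h * (dx h v q)^2) + h * ((v (Suc q))^2 + (v q)^2) / (2 * \<eta>))"
    by (intro sum_mono abs_sq_increment_le h \<eta>)
  also have "\<dots> = \<eta> * (h * (\<Sum>q<N. (dx h v q)^2)) + h * (\<Sum>q<N. (v (Suc q))^2 + (v q)^2) / (2 * \<eta>)"
    by (simp only: sum.distrib sum_distrib_left[symmetric] sum_divide_distrib[symmetric])
  finally show ?thesis
    unfolding sum_sq_pairs_eq_gnorm2[OF N] using \<eta> by simp
qed

lemma sq_le_mean_plus_oscillation:
  fixes v :: "nat \<Rightarrow> real"
  assumes h: "h > 0" and N: "N \<ge> 1" and osc: "\<And>m. m \<le> N \<Longrightarrow> (v i)^2 - (v m)^2 \<le> C"
  shows "(v i)^2 \<le> gnorm2 h N v / (h * real N) + C"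
proof -
  have "h * real N * (v i)^2 = trapezoid_sum h N (\<lambda>_. (v i)^2)"
    using N by (simp add: trapezoid_sum_const)
  also have "\<dots> \<le> trapezoid_sum h N (\<lambda>m. (v m)^2 + C)"
    using h osc by (intro trapezoid_sum_mono) (auto simp: algebra_simps)
  also have "\<dots> = gnorm2 h N v + h * real N * C"
    using N by (simp add: trapezoid_sum_add trapezoid_sum_const gnorm2_eq_trapezoid_sum)
  finally show ?thesis
    using h N by (simp add: field_simps)
qed

lemma gnorm_inf_attained: "\<exists>i\<le>N. gnorm_inf N v = \<bar>v i\<bar>"
proof -
  have "gnorm_inf N v \<in> (\<lambda>i. \<bar>v i\<bar>) ` {0..N}"
    unfolding gnorm_inf_def by (intro Max_in) auto
  then show ?thesis by auto
qed

lemma discrete_sobolev: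
  fixes v :: "nat \<Rightarrow> real"
  assumes h: "h > 0" and N: "N \<ge> 1" and \<eta>: "\<eta> > 0"
  shows "(gnorm_inf N v)^2
    \<le> gnorm2 h N v / (h * real N) + gnorm2 h N v / \<eta> + \<eta> * (h * (\<Sum>m<N. (dx h v m)^2))"
proof -
  obtain i where i: "i \<le> N" "gnorm_inf N v = \<bar>v i\<bar>"
    using gnorm_inf_attained by blast
  have "(v i)^2 - (v m)^2 \<le> \<eta> * (h * (\<Sum>q<N. (dx h v q)^2)) + gnorm2 h N v / \<eta>" if "m \<le> N" for m
    using diff_le_sum_abs_increments[OF i(1) that, of "\<lambda>q. (v q)^2"] sum_abs_sq_increments_le[OF h N \<eta>, of v]
    by (rule order_trans)
  then have "(v i)^2 \<le> gnorm2 h N v / (h * real N) + (\<eta> * (h * (\<Sum>q<N. (dx h v q)^2)) + gnorm2 h N v / \<eta>)"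
    by (rule sq_le_mean_plus_oscillation[OF h N])
  then show ?thesis
    using i(2) by simp
qed

text \<open>The constant \<open>\<eta>\<close> of the stability bound is the positive root of
  \<open>\<mu> \<eta>\<^sup>2 / 4 = \<eta> / L + 1\<close>, which turns the Sobolev bound into a multiple of the energy.\<close>

lemma sobolev_constant:
  fixes L \<mu> :: real
  assumes L: "L > 0" and \<mu>: "\<mu> > 0"
  defines "\<eta> \<equiv> 2 * (1 + sqrt (1 + L^2 * \<mu>)) / (L * \<mu>)"
  shows "\<eta> > 0" and "1 / L + 1 / \<eta> = \<eta> * \<mu> / 4"
proof -
  define S where "S = sqrt (1 + L^2 * \<mu>)"
  have S2: "S^2 = 1 + L^2 * \<mu>" and S1: "S \<ge> 1"
    unfolding S_def using L \<mu> by simp_all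
  show "\<eta> > 0"
    unfolding \<eta>_def S_def[symmetric] using S1 L \<mu> by simp
  have "(1 + S) / (2 * L) - 1 / L = (S - 1) / (2 * L)"
    using L by (simp add: field_simps)
  also have "\<dots> = L * \<mu> / (2 * (1 + S))"
  proof -
    have "(S - 1) * (2 * (1 + S)) = L * \<mu> * (2 * L)"
      using S2 by (simp add: algebra_simps power2_eq_square)
    then show ?thesis
      using L S1 by (simp add: frac_eq_eq)
  qed
  finally have "(1 + S) / (2 * L) - 1 / L = L * \<mu> / (2 * (1 + S))" .
  moreover have "\<eta> * \<mu> / 4 = (1 + S) / (2 * L)" and "1 / \<eta> = L * \<mu> / (2 * (1 + S))"
    unfolding \<eta>_def S_def[symmetric] using L \<mu> S1 by (simp_all add: field_simps)
  ultimately show "1 / L + 1 / \<eta> = \<eta> * \<mu> / 4"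
    by linarith
qed

lemma gnorm_inf_sq_le_energy:
  fixes v :: "nat \<Rightarrow> real"
  assumes h: "h > 0" and N: "N \<ge> 1" and \<mu>: "\<mu> > 0" and L: "L = h * real N"
  shows "(gnorm_inf N v)^2
    \<le> 2 * (1 + sqrt (1 + L^2 * \<mu>)) / (L * \<mu>) * (\<mu> / 4 * gnorm2 h N v + h * (\<Sum>m<N. (dx h v m)^2))"
proof -
  define \<eta> where "\<eta> = 2 * (1 + sqrt (1 + L^2 * \<mu>)) / (L * \<mu>)"
  have "L > 0"
    unfolding L using h N by simp
  note \<eta> = sobolev_constant[OF this \<mu>, folded \<eta>_def]
  have "(gnorm_inf N v)^2 \<le> gnorm2 h N v * (1 / L + 1 / \<eta>) + \<eta> * (h * (\<Sum>m<N. (dx h v m)^2))"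
    using discrete_sobolev[OF h N \<eta>(1), of v] unfolding L by (simp add: algebra_simps)
  then show ?thesis
    unfolding \<eta>_def[symmetric] \<eta>(2) by (simp add: algebra_simps)
qed

section \<open>Stability\<close>

lemma trapezoid_time_energy:
  fixes u F :: "nat \<Rightarrow> nat \<Rightarrow> real"
  assumes h: "h \<ge> 0"
    and energy: "\<And>i. i \<le> N \<Longrightarrow>
      c * (dt * (\<Sum>k=1..n. (u i k)^2)) - r * (u i 0)^2 \<le> dt * (\<Sum>k=1..n. u i k * F i k)"
  shows "c * (dt * (\<Sum>k=1..n. gnorm2 h N (\<lambda>i. u i k))) - r * gnorm2 h N (\<lambda>i. u i 0)
    \<le> dt * (\<Sum>k=1..n. trapezoid_sum h N (\<lambda>i. u i k * F i k))"
proof -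
  have "c * (dt * (\<Sum>k=1..n. gnorm2 h N (\<lambda>i. u i k))) - r * gnorm2 h N (\<lambda>i. u i 0)
      = trapezoid_sum h N (\<lambda>i. c * (dt * (\<Sum>k=1..n. (u i k)^2)) - r * (u i 0)^2)"
    by (simp add: trapezoid_sum_diff trapezoid_sum_cmult trapezoid_sum_sum gnorm2_eq_trapezoid_sum)
  also have "\<dots> \<le> trapezoid_sum h N (\<lambda>i. dt * (\<Sum>k=1..n. u i k * F i k))"
    using h energy by (rule trapezoid_sum_mono)
  also have "\<dots> = dt * (\<Sum>k=1..n. trapezoid_sum h N (\<lambda>i. u i k * F i k))"
    by (simp add: trapezoid_sum_cmult trapezoid_sum_sum)
  finally show ?thesis .
qed

lemma scheme_energy_estimate:
  fixes u f Fa Fh :: "nat \<Rightarrow> nat \<Rightarrow> real"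
  assumes h: "h > 0" and N: "N \<ge> 1" and dt: "dt > 0" and \<mu>: "\<mu> > 0" and \<nu>: "\<nu> > 0"
    and interior: "\<And>i k. 1 \<le> i \<Longrightarrow> i \<le> N - 1 \<Longrightarrow> 1 \<le> k \<Longrightarrow> k \<le> n \<Longrightarrow>
        Fa i k = dxx h (\<lambda>j. u j k) i + f i k"
    and left: "\<And>k. 1 \<le> k \<Longrightarrow> k \<le> n \<Longrightarrow> Fa 0 k = 2 / h * (dx h (\<lambda>j. u j k) 0 - Fh 0 k) + f 0 k"
    and right: "\<And>k. 1 \<le> k \<Longrightarrow> k \<le> n \<Longrightarrow>
        Fa N k = 2 / h * (- dx h (\<lambda>j. u j k) (N - 1) - Fh N k) + f N k"
    and energy: "\<And>i. i \<le> N \<Longrightarrow>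
        \<mu> / 2 * (dt * (\<Sum>k=1..n. (u i k)^2)) - \<rho> * (u i 0)^2 \<le> dt * (\<Sum>k=1..n. u i k * Fa i k)"
    and boundary_energy: "\<And>i. i \<in> {0, N} \<Longrightarrow>
        \<nu> / 2 * (dt * (\<Sum>k=1..n. (u i k)^2)) - \<rho>\<^sub>b * (u i 0)^2 \<le> dt * (\<Sum>k=1..n. u i k * Fh i k)"
  shows "dt * (\<Sum>k=1..n. \<mu> / 4 * gnorm2 h N (\<lambda>i. u i k) + h * (\<Sum>m<N. (dx h (\<lambda>j. u j k) m)^2))
    \<le> \<rho> * gnorm2 h N (\<lambda>i. u i 0) + \<rho>\<^sub>b * ((u 0 0)^2 + (u N 0)^2)
      + dt / (8 * \<nu>) * (\<Sum>k=1..n. (h * f 0 k)^2 + (h * f N k)^2)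
      + dt / \<mu> * (\<Sum>k=1..n. h * (\<Sum>i=1..N-1. (f i k)^2))"
proof -
  define G where "G k = gnorm2 h N (\<lambda>i. u i k)" for k
  define B where "B k = (u 0 k)^2 + (u N k)^2" for k
  define D where "D k = h * (\<Sum>m<N. (dx h (\<lambda>j. u j k) m)^2)" for k
  define P where "P k = trapezoid_sum h N (\<lambda>i. u i k * Fa i k)" for k
  define Q where "Q k = u 0 k * Fh 0 k + u N k * Fh N k" for k
  define R where "R k = ((h * f 0 k)^2 + (h * f N k)^2) / (8 * \<nu>) + h * (\<Sum>i=1..N-1. (f i k)^2) / \<mu>" for k
  have "P k + Q k + D k \<le> \<mu> / 4 * G k + \<nu> / 2 * B k + R k" if "k \<in> {1..n}" for k
  proof -
    have "P k + Q k + D k = trapezoid_sum h N (\<lambda>i. u i k * f i k)"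
      unfolding P_def Q_def D_def
      by (rule scheme_energy_identity[OF h N]) (use that interior left right in auto)
    also have "\<dots> \<le> \<mu> / 4 * G k + \<nu> / 2 * B k + R k"
      using trapezoid_young[OF h \<mu> \<nu>, where v = "\<lambda>i. u i k" and f = "\<lambda>i. f i k"]
      unfolding G_def B_def R_def by (simp only: add.assoc)
    finally show ?thesis .
  qed
  then have "dt * (\<Sum>k=1..n. P k + Q k + D k) \<le> dt * (\<Sum>k=1..n. \<mu> / 4 * G k + \<nu> / 2 * B k + R k)"
    using dt by (intro mult_left_mono sum_mono) auto
  moreover have "dt * (\<Sum>k=1..n. P k + Q k + D k) = dt * (\<Sum>k=1..n. P k) + dt * (\<Sum>k=1..n. Q k) + dt * (\<Sum>k=1..n. D k)"
    and "dt * (\<Sum>k=1..n. \<mu> / 4 * G k + \<nu> / 2 * B k + R k)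
      = \<mu> / 4 * (dt * (\<Sum>k=1..n. G k)) + \<nu> / 2 * (dt * (\<Sum>k=1..n. B k)) + dt * (\<Sum>k=1..n. R k)"
    and "dt * (\<Sum>k=1..n. \<mu> / 4 * G k + D k) = \<mu> / 4 * (dt * (\<Sum>k=1..n. G k)) + dt * (\<Sum>k=1..n. D k)"
    by (simp_all add: sum.distrib distrib_left sum_distrib_left mult_ac)
  moreover have "\<mu> / 2 * (dt * (\<Sum>k=1..n. G k)) - \<rho> * G 0 \<le> dt * (\<Sum>k=1..n. P k)"
    unfolding G_def P_def using h energy by (intro trapezoid_time_energy) auto
  moreover have "\<nu> / 2 * (dt * (\<Sum>k=1..n. B k)) - \<rho>\<^sub>b * B 0 \<le> dt * (\<Sum>k=1..n. Q k)"
    using boundary_energy[of 0] boundary_energy[of N]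
    unfolding B_def Q_def by (simp add: sum.distrib algebra_simps)
  moreover have "dt * (\<Sum>k=1..n. R k) = dt / (8 * \<nu>) * (\<Sum>k=1..n. (h * f 0 k)^2 + (h * f N k)^2)
      + dt / \<mu> * (\<Sum>k=1..n. h * (\<Sum>i=1..N-1. (f i k)^2))"
    unfolding R_def by (simp add: sum.distrib sum_distrib_left sum_divide_distrib add_divide_distrib algebra_simps)
  ultimately show ?thesis
    unfolding G_def[symmetric] B_def[symmetric] D_def[symmetric] by linarith
qed

lemma scheme_stability:
  fixes u f Fa Fh :: "nat \<Rightarrow> nat \<Rightarrow> real"
  assumes h: "h > 0" and N: "N \<ge> 1" and L: "L = h * real N" and dt: "dt > 0" and \<mu>: "\<mu> > 0" and \<nu>: "\<nu> > 0"
    and interior: "\<And>i k. 1 \<le> i \<Longrightarrow> i \<le> N - 1 \<Longrightarrow> 1 \<le> k \<Longrightarrow> k \<le> n \<Longrightarrow>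
        Fa i k = dxx h (\<lambda>j. u j k) i + f i k"
    and left: "\<And>k. 1 \<le> k \<Longrightarrow> k \<le> n \<Longrightarrow> Fa 0 k = 2 / h * (dx h (\<lambda>j. u j k) 0 - Fh 0 k) + f 0 k"
    and right: "\<And>k. 1 \<le> k \<Longrightarrow> k \<le> n \<Longrightarrow>
        Fa N k = 2 / h * (- dx h (\<lambda>j. u j k) (N - 1) - Fh N k) + f N k"
    and energy: "\<And>i. i \<le> N \<Longrightarrow>
        \<mu> / 2 * (dt * (\<Sum>k=1..n. (u i k)^2)) - \<rho> * (u i 0)^2 \<le> dt * (\<Sum>k=1..n. u i k * Fa i k)"
    and boundary_energy: "\<And>i. i \<in> {0, N} \<Longrightarrow>
        \<nu> / 2 * (dt * (\<Sum>k=1..n. (u i k)^2)) - \<rho>\<^sub>b * (u i 0)^2 \<le> dt * (\<Sum>k=1..n. u i k * Fh i k)"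
  shows "dt * (\<Sum>k=1..n. (gnorm_inf N (\<lambda>i. u i k))^2)
    \<le> 2 * (1 + sqrt (1 + L^2 * \<mu>)) / (L * \<mu>) *
       (\<rho> * gnorm2 h N (\<lambda>i. u i 0) + \<rho>\<^sub>b * ((u 0 0)^2 + (u N 0)^2)
        + dt / (8 * \<nu>) * (\<Sum>k=1..n. (h * f 0 k)^2 + (h * f N k)^2)
        + dt / \<mu> * (\<Sum>k=1..n. h * (\<Sum>i=1..N-1. (f i k)^2)))"
proof -
  define \<eta> where "\<eta> = 2 * (1 + sqrt (1 + L^2 * \<mu>)) / (L * \<mu>)"
  define E where "E k = \<mu> / 4 * gnorm2 h N (\<lambda>i. u i k) + h * (\<Sum>m<N. (dx h (\<lambda>j. u j k) m)^2)" for k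
  have "\<eta> > 0"
    unfolding \<eta>_def using h N L \<mu> by (intro sobolev_constant) auto
  have "dt * (\<Sum>k=1..n. (gnorm_inf N (\<lambda>i. u i k))^2) \<le> dt * (\<Sum>k=1..n. \<eta> * E k)"
    unfolding \<eta>_def E_def using dt by (intro mult_left_mono sum_mono gnorm_inf_sq_le_energy h N \<mu> L) auto
  also have "\<dots> = \<eta> * (dt * (\<Sum>k=1..n. E k))"
    by (simp add: sum_distrib_left mult_ac)
  also have "\<dots> \<le> \<eta> * (\<rho> * gnorm2 h N (\<lambda>i. u i 0) + \<rho>\<^sub>b * ((u 0 0)^2 + (u N 0)^2)
        + dt / (8 * \<nu>) * (\<Sum>k=1..n. (h * f 0 k)^2 + (h * f N k)^2)
        + dt / \<mu> * (\<Sum>k=1..n. h * (\<Sum>i=1..N-1. (f i k)^2)))"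
    unfolding E_def using \<open>\<eta> > 0\<close>
    by (intro mult_left_mono scheme_energy_estimate[OF h N dt \<mu> \<nu> interior left right energy boundary_energy]) auto
  finally show ?thesis
    unfolding \<eta>_def .
qed

theorem theorem4:
  fixes \<alpha> x\<^sub>l x\<^sub>r T \<epsilon> :: real
    and N\<^sub>T N\<^sub>S Nexp :: nat
    and wA sA wH sH :: "nat \<Rightarrow> real"
    and u f :: "nat \<Rightarrow> nat \<Rightarrow> real"
    and n :: nat
  defines "L \<equiv> x\<^sub>r - x\<^sub>l"
    and "dt \<equiv> T / real N\<^sub>T"
    and "h \<equiv> (x\<^sub>r - x\<^sub>l) / real N\<^sub>S"
  assumes "0 < \<alpha>" "\<alpha> < 1" "x\<^sub>l < x\<^sub>r" "T > 0" "N\<^sub>T > 0" "N\<^sub>S > 0"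
    and SOE_alpha: "SOE_approx \<alpha> dt T \<epsilon> Nexp wA sA"
    and SOE_half: "SOE_approx (\<alpha>/2) dt T \<epsilon> Nexp wH sH"
    and interior: "\<And>i k. 1 \<le> i \<Longrightarrow> i \<le> N\<^sub>S - 1 \<Longrightarrow> 1 \<le> k \<Longrightarrow> k \<le> N\<^sub>T \<Longrightarrow>
        FIR dt \<alpha> Nexp wA sA (\<lambda>m. u i m) k = dxx h (\<lambda>j. u j k) i + f i k"
    and left: "\<And>k. 1 \<le> k \<Longrightarrow> k \<le> N\<^sub>T \<Longrightarrow>
        FIR dt \<alpha> Nexp wA sA (\<lambda>m. u 0 m) k
          = 2 / h * (dx h (\<lambda>j. u j k) 0 - FIR dt (\<alpha>/2) Nexp wH sH (\<lambda>m. u 0 m) k) + f 0 k"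
    and right: "\<And>k. 1 \<le> k \<Longrightarrow> k \<le> N\<^sub>T \<Longrightarrow>
        FIR dt \<alpha> Nexp wA sA (\<lambda>m. u N\<^sub>S m) k
          = 2 / h * (- dx h (\<lambda>j. u j k) (N\<^sub>S - 1) - FIR dt (\<alpha>/2) Nexp wH sH (\<lambda>m. u N\<^sub>S m) k)
            + f N\<^sub>S k"
    and n: "1 \<le> n" "n \<le> N\<^sub>T"
    and mu_pos: "(real n * dt) powr (-\<alpha>) - 2 * \<alpha> * \<epsilon> * ((real n - 1) * dt) > 0"
    and nu_pos: "(real n * dt) powr (-\<alpha>/2) - \<alpha> * \<epsilon> * ((real n - 1) * dt) > 0"
  shows
   "let tn = real n * dt; tn1 = (real n - 1) * dt;
        \<rho> = (tn powr (1 - \<alpha>) - \<alpha> * (1 - \<alpha>) * \<epsilon> * tn1 * dt) / Gamma (2 - \<alpha>);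
        \<mu> = (tn powr (-\<alpha>) - 2 * \<alpha> * \<epsilon> * tn1) / Gamma (1 - \<alpha>);
        \<rho>\<^sub>h = (tn powr (1 - \<alpha>/2) - (\<alpha>/2) * (1 - \<alpha>/2) * \<epsilon> * tn1 * dt) / Gamma (2 - \<alpha>/2);
        \<nu> = (tn powr (-\<alpha>/2) - \<alpha> * \<epsilon> * tn1) / Gamma (1 - \<alpha>/2)
    in dt * (\<Sum>k = 1..n. (gnorm_inf N\<^sub>S (\<lambda>i. u i k))^2)
       \<le> 2 * (1 + sqrt (1 + L^2 * \<mu>)) / (L * \<mu>) *
          (\<rho> * gnorm2 h N\<^sub>S (\<lambda>i. u i 0)
           + \<rho>\<^sub>h * ((u 0 0)^2 + (u N\<^sub>S 0)^2)
           + dt / (8 * \<nu>) * (\<Sum>k = 1..n. (h * f 0 k)^2 + (h * f N\<^sub>S k)^2)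
           + dt / \<mu> * (\<Sum>k = 1..n. h * (\<Sum>i = 1..N\<^sub>S - 1. (f i k)^2)))"
proof -
  have dt: "dt > 0" and h: "h > 0" and N: "N\<^sub>S \<ge> 1" and L: "L = h * real N\<^sub>S"
    using \<open>x\<^sub>l < x\<^sub>r\<close> \<open>T > 0\<close> \<open>N\<^sub>T > 0\<close> \<open>N\<^sub>S > 0\<close> unfolding dt_def h_def L_def by auto
  have nT: "real n * dt \<le> T"
    using n \<open>T > 0\<close> \<open>N\<^sub>T > 0\<close> unfolding dt_def by (simp add: field_simps mult_left_mono)
  have \<alpha>: "0 < \<alpha>" "\<alpha> < 1" and half: "0 < \<alpha> / 2" "\<alpha> / 2 < 1"
    using \<open>0 < \<alpha>\<close> \<open>\<alpha> < 1\<close> by auto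
  have boundary_energy: "((real n * dt) powr (-\<alpha>/2) - \<alpha> * \<epsilon> * ((real n - 1) * dt)) / Gamma (1 - \<alpha>/2) / 2
        * (dt * (\<Sum>k=1..n. (u i k)^2))
      - ((real n * dt) powr (1 - \<alpha>/2) - (\<alpha>/2) * (1 - \<alpha>/2) * \<epsilon> * ((real n - 1) * dt) * dt)
          / Gamma (2 - \<alpha>/2) * (u i 0)^2
      \<le> dt * (\<Sum>k=1..n. u i k * FIR dt (\<alpha>/2) Nexp wH sH (\<lambda>m. u i m) k)" for i
    using FIR_energy_ge[OF dt half SOE_half n(1) nT, of "\<lambda>m. u i m"] nu_pos by simp
  show ?thesis
    unfolding Let_def
    by (rule scheme_stability[OF h N L dt _ _ _ _ _ FIR_energy_ge[OF dt \<alpha> SOE_alpha n(1) nT mu_pos]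
          boundary_energy])
      (use \<alpha> mu_pos nu_pos n interior left right in auto)
qed

end
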